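(* Let $E$ be a Banach $f$-algebra with order continuous norm and with a weak order unit $e$, and let $(x_\alpha)_{\alpha\in A}$ be a decreasing net in $E_+$. Then $x_\alpha\xrightarrow{mw}0$ if and only if $x_\alpha e\to0$ weakly.
   Context: All vector lattices are real and Archimedean. An $f$-algebra is a vector lattice with an associative multiplication making it an algebra, such that products of positive elements are positive and $x\wedge y=0$ implies $(xz)\wedge y=(zx)\wedge y=0$ for all $z\ge0$. A Banach $f$-algebra is an $f$-algebra which is a Banach lattice with $\|xy\|\le\|x\|\|y\|$. A net $(x_\alpha)$ in $E$ $mw$-converges to $x$ ($x_\alpha\xrightarrow{mw}x$) if $|x_\alpha-x|u\to0$ weakly for every $u\in E_+$. A weak order unit is an element $e>0$ whose generated band is all of $E$. *)

theory Defs
  imports Complex_Main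
begin

class banach_lattice_algebra = real_normed_algebra + banach + ordered_real_vector + lattice

definition labs :: "'a::{ab_group_add,lattice} \<Rightarrow> 'a" where
  "labs x = sup x (- x)"

definition is_sup_of :: "'a::order set \<Rightarrow> 'a \<Rightarrow> bool" where
  "is_sup_of D s \<longleftrightarrow> (\<forall>d\<in>D. d \<le> s) \<and> (\<forall>u. (\<forall>d\<in>D. d \<le> u) \<longrightarrow> s \<le> u)"

definition is_inf_of :: "'a::order set \<Rightarrow> 'a \<Rightarrow> bool" where
  "is_inf_of D s \<longleftrightarrow> (\<forall>d\<in>D. s \<le> d) \<and> (\<forall>l. (\<forall>d\<in>D. l \<le> d) \<longrightarrow> l \<le> s)"

definition banach_f_algebra :: "'a::banach_lattice_algebra itself \<Rightarrow> bool" where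
  "banach_f_algebra _ \<longleftrightarrow>
     \<comment> \<open>Archimedean\<close>
     (\<forall>x y::'a. 0 \<le> x \<and> 0 \<le> y \<and> (\<forall>n::nat. of_nat n *\<^sub>R x \<le> y) \<longrightarrow> x = 0) \<and>
     \<comment> \<open>Banach lattice norm\<close>
     (\<forall>x y::'a. labs x \<le> labs y \<longrightarrow> norm x \<le> norm y) \<and>
     \<comment> \<open>f-algebra\<close>
     (\<forall>x y::'a. 0 \<le> x \<and> 0 \<le> y \<longrightarrow> 0 \<le> x * y) \<and>
     (\<forall>x y z::'a. inf x y = 0 \<and> 0 \<le> z \<longrightarrow> inf (x * z) y = 0 \<and> inf (z * x) y = 0)"

text \<open>Order continuous norm: for every downward directed set D with infimum 0,
  inf of norms over D is 0 (i.e. the net (d)_{d in D} decreasing to 0 is norm-null).\<close>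
definition order_continuous_norm :: "'a::banach_lattice_algebra itself \<Rightarrow> bool" where
  "order_continuous_norm _ \<longleftrightarrow>
     (\<forall>D::'a set. D \<noteq> {} \<and> (\<forall>a\<in>D. \<forall>b\<in>D. \<exists>c\<in>D. c \<le> a \<and> c \<le> b) \<and> is_inf_of D 0
        \<longrightarrow> (\<forall>\<epsilon>>0. \<exists>d\<in>D. norm d < \<epsilon>))"

definition is_band :: "'a::banach_lattice_algebra set \<Rightarrow> bool" where
  "is_band B \<longleftrightarrow>
     0 \<in> B \<and> (\<forall>x\<in>B. \<forall>y\<in>B. x + y \<in> B) \<and> (\<forall>c. \<forall>x\<in>B. c *\<^sub>R x \<in> B) \<and>
     (\<forall>x\<in>B. \<forall>y. labs y \<le> labs x \<longrightarrow> y \<in> B) \<and>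
     (\<forall>D s. D \<subseteq> B \<and> is_sup_of D s \<longrightarrow> s \<in> B)"

definition band_generated :: "'a::banach_lattice_algebra set \<Rightarrow> 'a set" where
  "band_generated S = \<Inter>{B. is_band B \<and> S \<subseteq> B}"

definition weak_order_unit :: "'a::banach_lattice_algebra \<Rightarrow> bool" where
  "weak_order_unit e \<longleftrightarrow> 0 < e \<and> band_generated {e} = UNIV"

definition directed_index :: "'i::preorder itself \<Rightarrow> bool" where
  "directed_index _ \<longleftrightarrow> (\<forall>a b::'i. \<exists>c. a \<le> c \<and> b \<le> c)"

definition net_lim :: "('i::preorder \<Rightarrow> real) \<Rightarrow> real \<Rightarrow> bool" where
  "net_lim g l \<longleftrightarrow> (\<forall>\<epsilon>>0. \<exists>a. \<forall>b. a \<le> b \<longrightarrow> \<bar>g b - l\<bar> < \<epsilon>)"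

definition weak_conv :: "('i::preorder \<Rightarrow> 'a::real_normed_vector) \<Rightarrow> 'a \<Rightarrow> bool" where
  "weak_conv x l \<longleftrightarrow> (\<forall>f::'a \<Rightarrow> real. bounded_linear f \<longrightarrow> net_lim (\<lambda>a. f (x a)) (f l))"

definition mw_conv :: "('i::preorder \<Rightarrow> 'a::banach_lattice_algebra) \<Rightarrow> 'a \<Rightarrow> bool" where
  "mw_conv x l \<longleftrightarrow> (\<forall>u::'a. 0 \<le> u \<longrightarrow> weak_conv (\<lambda>a. labs (x a - l) * u) 0)"

end

theory Submission
  imports Defs "HOL-Analysis.Product_Vector" "HOL-Library.Lattice_Algebras"
begin

text \<open>
  The forward direction is the case \<open>u = e\<close>. Conversely, the net \<open>x\<^sub>\<alpha> e\<close> is decreasing,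
  positive and weakly null. A positive functional \<open>f\<close> with \<open>f l = \<parallel>l\<^sup>+\<parallel>\<close>, obtained by
  Hahn-Banach from the sublinear functional \<open>x \<mapsto> \<parallel>x\<^sup>+\<parallel>\<close>, shows that every lower bound
  \<open>l\<close> of the net is \<open>\<le> 0\<close>; so its infimum is \<open>0\<close> and order continuity makes it norm null.
  For \<open>u \<ge> 0\<close> the truncations \<open>u \<sqinter> n e\<close> increase to \<open>u\<close>: the Archimedean property and
  the fact that the disjoint complement of \<open>e\<close> is a band (hence trivial) kill every lower
  bound of \<open>u - u \<sqinter> n e\<close>; order continuity again gives \<open>\<parallel>u - u \<sqinter> n e\<parallel> \<rightarrow> 0\<close>. Finally
  \<open>0 \<le> x\<^sub>\<alpha> (u \<sqinter> n e) \<le> n x\<^sub>\<alpha> e\<close> yields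
  \<open>\<parallel>x\<^sub>\<alpha> u\<parallel> \<le> n \<parallel>x\<^sub>\<alpha> e\<parallel> + \<parallel>x\<^sub>\<alpha>\<parallel> \<parallel>u - u \<sqinter> n e\<parallel>\<close>, and the tail of the decreasing net is
  norm bounded, so \<open>x\<^sub>\<alpha> u\<close> is norm null, a fortiori weakly null.
\<close>

section \<open>Hahn-Banach for sublinear functionals\<close>

text \<open>Partial linear functionals below \<open>p\<close> are represented by their graphs, subspaces of
  \<open>'a \<times> real\<close>, so that Zorn's lemma applies to set inclusion.\<close>

definition dominated_linear_graph :: "('a::real_vector \<Rightarrow> real) \<Rightarrow> ('a \<times> real) set \<Rightarrow> bool" where
  "dominated_linear_graph p G \<longleftrightarrow> subspace G \<and> (\<forall>(x, a) \<in> G. a \<le> p x)"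

context
  fixes p :: "'a::real_vector \<Rightarrow> real"
  assumes p_add: "\<And>x y. p (x + y) \<le> p x + p y"
    and p_scaleR: "\<And>c x. 0 \<le> c \<Longrightarrow> p (c *\<^sub>R x) = c * p x"
begin

lemma sublinear_0: "p 0 = 0"
  using p_scaleR[of 0 0] by simp

lemma dominated_linear_graph_unique:
  assumes "dominated_linear_graph p G" "(x, a) \<in> G" "(x, b) \<in> G"
  shows "a = b"
proof -
  have G: "subspace G" and le: "\<And>x a. (x, a) \<in> G \<Longrightarrow> a \<le> p x"
    using assms(1) unfolding dominated_linear_graph_def by auto
  have "(0, a - b) \<in> G" "(0, b - a) \<in> G"
    using subspace_diff[OF G assms(2,3)] subspace_diff[OF G assms(3,2)] by simp_all
  then have "a - b \<le> p 0" "b - a \<le> p 0"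
    using le by blast+
  then show ?thesis
    using sublinear_0 by simp
qed

text \<open>The one-dimensional extension step: subadditivity puts every \<open>b - p (u - y)\<close> below
  every \<open>p (u' + y) - b'\<close>, and any value in between extends the graph to \<open>y\<close>.\<close>

lemma dominated_extension_value_exists:
  assumes "dominated_linear_graph p G"
  shows "\<exists>c. \<forall>(u, b) \<in> G. b + c \<le> p (u + y) \<and> b - c \<le> p (u - y)"
proof -
  have G: "subspace G" and le: "\<And>x a. (x, a) \<in> G \<Longrightarrow> a \<le> p x"
    using assms unfolding dominated_linear_graph_def by auto
  define S where "S = {a - p (x - y) | x a. (x, a) \<in> G}"
  have key: "a - p (x - y) \<le> p (z + y) - b" if "(x, a) \<in> G" "(z, b) \<in> G" for x a z b
  proof -
    have "a + b \<le> p (x + z)"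
      using le subspace_add[OF G that] by simp
    also have "\<dots> \<le> p (x - y) + p (z + y)"
      using p_add[of "x - y" "z + y"] by simp
    finally show ?thesis by simp
  qed
  have "(0, 0) \<in> G"
    using subspace_0[OF G] by (simp add: zero_prod_def)
  then have "S \<noteq> {}" "bdd_above S"
    unfolding S_def bdd_above_def using key by blast+
  have "b - p (u - y) \<le> Sup S" "Sup S \<le> p (u + y) - b" if "(u, b) \<in> G" for u b
    using that key \<open>S \<noteq> {}\<close> \<open>bdd_above S\<close>
    by (auto simp: S_def intro!: cSup_upper cSup_least)
  then show ?thesis
    by (intro exI[of _ "Sup S"]) force
qed

lemma dominated_linear_graph_insert:
  assumes "dominated_linear_graph p G"
    and c: "\<forall>(u, b) \<in> G. b + c \<le> p (u + y) \<and> b - c \<le> p (u - y)"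
  shows "dominated_linear_graph p (span (insert (y, c) G))"
proof -
  have G: "subspace G"
    using assms(1) unfolding dominated_linear_graph_def by auto
  have scaled: "(inverse s *\<^sub>R u, inverse s * b) \<in> G" if "(u, b) \<in> G" for s u b
    using subspace_scale[OF G that, of "inverse s"] by simp
  have le: "b + k * c \<le> p (u + k *\<^sub>R y)" if "(u, b) \<in> G" for u b k
  proof -
    consider "k = 0" | "k > 0" | "k < 0" by linarith
    then show ?thesis
    proof cases
      case 1
      then show ?thesis
        using assms(1) that unfolding dominated_linear_graph_def by auto
    next
      case 2
      have "inverse k * b + c \<le> p (inverse k *\<^sub>R u + y)"
        using c scaled[OF that, of k] by auto
      then have "k * (inverse k * b + c) \<le> p (k *\<^sub>R (inverse k *\<^sub>R u + y))"
        using 2 by (simp add: p_scaleR mult_left_mono)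
      then show ?thesis
        using 2 by (simp add: algebra_simps)
    next
      case 3
      define s where "s = - k"
      have s: "s > 0" "k = - s"
        using 3 by (simp_all add: s_def)
      have "inverse s * b - c \<le> p (inverse s *\<^sub>R u - y)"
        using c scaled[OF that, of s] by auto
      then have "s * (inverse s * b - c) \<le> p (s *\<^sub>R (inverse s *\<^sub>R u - y))"
        using s by (simp add: p_scaleR mult_left_mono)
      then show ?thesis
        using s by (simp add: algebra_simps)
    qed
  qed
  have "a \<le> p x" if xa: "(x, a) \<in> span (insert (y, c) G)" for x a
  proof -
    obtain k where "(x, a) - k *\<^sub>R (y, c) \<in> span G"
      using xa unfolding span_breakdown_eq by blast
    then have "(x - k *\<^sub>R y, a - k * c) \<in> G"
      using span_eq_iff[THEN iffD2, OF G] by simp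
    then show ?thesis
      using le[of "x - k *\<^sub>R y" "a - k * c" k] by simp
  qed
  then show ?thesis
    unfolding dominated_linear_graph_def by auto
qed

lemma dominated_linear_graph_Union:
  assumes "C \<noteq> {}" "subset.chain {G. dominated_linear_graph p G} C"
  shows "dominated_linear_graph p (\<Union>C)"
proof -
  have sub: "\<And>G. G \<in> C \<Longrightarrow> subspace G"
    and le: "\<And>G. G \<in> C \<Longrightarrow> \<forall>(x, a) \<in> G. a \<le> p x"
    using assms(2) unfolding subset.chain_def dominated_linear_graph_def by auto
  have chain: "\<And>G H. G \<in> C \<Longrightarrow> H \<in> C \<Longrightarrow> G \<subseteq> H \<or> H \<subseteq> G"
    using assms(2) unfolding subset.chain_def by blast
  have "subspace (\<Union>C)"
  proof (rule subspaceI)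
    show "0 \<in> \<Union>C"
      using assms(1) sub subspace_0 by blast
    show "g + h \<in> \<Union>C" if gh: "g \<in> \<Union>C" "h \<in> \<Union>C" for g h
    proof -
      obtain G H where "G \<in> C" "g \<in> G" "H \<in> C" "h \<in> H"
        using gh by blast
      then have "(g \<in> H \<and> h \<in> H \<and> H \<in> C) \<or> (g \<in> G \<and> h \<in> G \<and> G \<in> C)"
        using chain by blast
      then show ?thesis
        using sub subspace_add by blast
    qed
    show "c *\<^sub>R g \<in> \<Union>C" if "g \<in> \<Union>C" for c g
      using that sub subspace_scale by blast
  qed
  then show ?thesis
    using le unfolding dominated_linear_graph_def by blast
qed

lemma maximal_dominated_linear_graph_exists:
  obtains M where "dominated_linear_graph p M" "(x0, p x0) \<in> M"
    "\<And>G. dominated_linear_graph p G \<Longrightarrow> M \<subseteq> G \<Longrightarrow> G = M"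
proof -
  define \<G> where "\<G> = {G. dominated_linear_graph p G \<and> (x0, p x0) \<in> G}"
  have "dominated_linear_graph p {0}"
    unfolding dominated_linear_graph_def by (simp add: sublinear_0 split_beta)
  moreover have "\<forall>(u, b) \<in> {0}. b + p x0 \<le> p (u + x0) \<and> b - p x0 \<le> p (u - x0)"
    using p_add[of x0 "- x0"] by (simp add: zero_prod_def sublinear_0)
  ultimately have "span (insert (x0, p x0) {0}) \<in> \<G>"
    unfolding \<G>_def by (simp add: dominated_linear_graph_insert span_base)
  moreover have "\<Union>C \<in> \<G>" if "C \<noteq> {}" "subset.chain \<G> C" for C
  proof -
    have "subset.chain {G. dominated_linear_graph p G} C"
      using that(2) unfolding subset.chain_def \<G>_def by blast
    then have "dominated_linear_graph p (\<Union>C)"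
      by (rule dominated_linear_graph_Union[OF that(1)])
    moreover have "(x0, p x0) \<in> \<Union>C"
      using that unfolding \<G>_def subset.chain_def by blast
    ultimately show ?thesis
      unfolding \<G>_def by blast
  qed
  ultimately have "\<exists>M\<in>\<G>. \<forall>G\<in>\<G>. M \<subseteq> G \<longrightarrow> G = M"
    by (intro subset_Zorn_nonempty) blast+
  then obtain M where "M \<in> \<G>" and maximal: "\<And>G. G \<in> \<G> \<Longrightarrow> M \<subseteq> G \<Longrightarrow> G = M"
    by blast
  then have "dominated_linear_graph p M" "(x0, p x0) \<in> M"
    unfolding \<G>_def by simp_all
  moreover have "G = M" if "dominated_linear_graph p G" "M \<subseteq> G" for G
    using maximal that \<open>(x0, p x0) \<in> M\<close> unfolding \<G>_def by blast
  ultimately show ?thesis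
    by (rule that)
qed

lemma maximal_dominated_linear_graph_total:
  assumes M: "dominated_linear_graph p M"
    and maximal: "\<And>G. dominated_linear_graph p G \<Longrightarrow> M \<subseteq> G \<Longrightarrow> G = M"
  shows "\<exists>a. (y, a) \<in> M"
proof -
  obtain c where "\<forall>(u, b) \<in> M. b + c \<le> p (u + y) \<and> b - c \<le> p (u - y)"
    using dominated_extension_value_exists[OF M] by blast
  then have "dominated_linear_graph p (span (insert (y, c) M))"
    by (rule dominated_linear_graph_insert[OF M])
  moreover have "M \<subseteq> span (insert (y, c) M)"
    using span_superset by blast
  ultimately have "span (insert (y, c) M) = M"
    by (rule maximal)
  then show ?thesis
    using span_base[of "(y, c)" "insert (y, c) M"] by auto
qed

theorem hahn_banach_sublinear:
  "\<exists>f. linear f \<and> (\<forall>x. f x \<le> p x) \<and> f x0 = p x0"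
proof -
  obtain M where M: "dominated_linear_graph p M" "(x0, p x0) \<in> M"
    and maximal: "\<And>G. dominated_linear_graph p G \<Longrightarrow> M \<subseteq> G \<Longrightarrow> G = M"
    using maximal_dominated_linear_graph_exists[of x0] by blast
  define f where "f y = (THE a. (y, a) \<in> M)" for y
  have graph: "(y, f y) \<in> M" for y
    unfolding f_def using maximal_dominated_linear_graph_total[OF M(1) maximal]
      dominated_linear_graph_unique[OF M(1)] by (metis theI)
  have M_subspace: "subspace M"
    using M(1) unfolding dominated_linear_graph_def by blast
  have "linear f"
  proof (rule linearI)
    show "f (x + y) = f x + f y" for x y
      using subspace_add[OF M_subspace graph graph] graph
      by (auto intro: dominated_linear_graph_unique[OF M(1)])
    show "f (c *\<^sub>R x) = c *\<^sub>R f x" for c x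
      using subspace_scale[OF M_subspace graph] graph
      by (auto intro: dominated_linear_graph_unique[OF M(1)])
  qed
  moreover have "f x \<le> p x" for x
    using M(1) graph unfolding dominated_linear_graph_def by blast
  moreover have "f x0 = p x0"
    using dominated_linear_graph_unique[OF M(1) graph M(2)] .
  ultimately show ?thesis
    by blast
qed

end

section \<open>Disjointness, bands and truncation by the weak order unit\<close>

subclass (in banach_lattice_algebra) lattice_ab_group_add ..

lemma labs_of_nonneg: "0 \<le> x \<Longrightarrow> labs (x::'a::lattice_ab_group_add) = x"
  unfolding labs_def by (simp add: sup_absorb1 order_trans[of "- x" 0 x])

lemma labs_ge: "x \<le> labs x" "- x \<le> labs (x::'a::lattice_ab_group_add)"
  unfolding labs_def by simp_all

lemma labs_nonneg: "0 \<le> labs (x::'a::lattice_ab_group_add)"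
proof -
  have "x + - x \<le> labs x + labs x"
    using labs_ge[of x] by (rule add_mono)
  then show ?thesis by simp
qed

lemma labs_add_le: "labs (x + y) \<le> labs x + labs (y::'a::lattice_ab_group_add)"
proof -
  have "- (x + y) \<le> labs x + labs y"
    using add_mono[OF labs_ge(2)[of x] labs_ge(2)[of y]] by simp
  then show ?thesis
    unfolding labs_def[of "x + y"] by (simp add: add_mono labs_ge)
qed

lemma scaleR_sup_distrib:
  fixes x y :: "'a::{ordered_real_vector, lattice}"
  assumes "0 \<le> c"
  shows "c *\<^sub>R sup x y = sup (c *\<^sub>R x) (c *\<^sub>R y)"
proof (cases "c = 0")
  case False
  then have c: "c > 0" using assms by simp
  have "sup x y \<le> inverse c *\<^sub>R sup (c *\<^sub>R x) (c *\<^sub>R y)"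
  proof (rule sup_least)
    show "x \<le> inverse c *\<^sub>R sup (c *\<^sub>R x) (c *\<^sub>R y)"
      using scaleR_left_mono[OF sup_ge1, of "inverse c" "c *\<^sub>R x" "c *\<^sub>R y"] c by simp
    show "y \<le> inverse c *\<^sub>R sup (c *\<^sub>R x) (c *\<^sub>R y)"
      using scaleR_left_mono[OF sup_ge2, of "inverse c" "c *\<^sub>R y" "c *\<^sub>R x"] c by simp
  qed
  then have "c *\<^sub>R sup x y \<le> c *\<^sub>R (inverse c *\<^sub>R sup (c *\<^sub>R x) (c *\<^sub>R y))"
    by (rule scaleR_left_mono) (use c in simp)
  then have "c *\<^sub>R sup x y \<le> sup (c *\<^sub>R x) (c *\<^sub>R y)"
    using c by simp
  moreover have "sup (c *\<^sub>R x) (c *\<^sub>R y) \<le> c *\<^sub>R sup x y"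
    using assms by (simp add: scaleR_left_mono)
  ultimately show ?thesis by (rule antisym)
qed simp

lemma labs_scaleR: "labs (c *\<^sub>R x) = \<bar>c\<bar> *\<^sub>R labs (x::'a::{ordered_real_vector, lattice})"
proof (cases "0 \<le> c")
  case True
  then show ?thesis
    unfolding labs_def using scaleR_sup_distrib[OF True, of x "- x"] by simp
next
  case False
  then have "c *\<^sub>R x = \<bar>c\<bar> *\<^sub>R (- x)"
    by simp
  then show ?thesis
    unfolding labs_def using scaleR_sup_distrib[of "\<bar>c\<bar>" "- x" x]
    by (simp add: sup_commute)
qed

lemma inf_add_le:
  fixes x a y :: "'a::lattice_ab_group_add"
  assumes "0 \<le> x" "0 \<le> a" "0 \<le> y"
  shows "inf x (a + y) \<le> inf x a + inf x y"
proof -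
  have "x \<le> x + x" "x \<le> x + y" "x \<le> a + x"
    using assms by (simp_all add: add_increasing add_increasing2)
  then have "inf x (a + y) \<le> inf (inf (x + x) (x + y)) (inf (a + x) (a + y))"
    by (meson inf_le1 inf_le2 le_infI order_trans)
  also have "\<dots> = inf x a + inf x y"
    by (simp add: add_inf_distrib_left add_inf_distrib_right inf_aci)
  finally show ?thesis .
qed

lemma le_of_disjoint_le_add:
  fixes x a y :: "'a::lattice_ab_group_add"
  assumes "0 \<le> x" "0 \<le> a" "0 \<le> y" "inf x y \<le> 0" "x \<le> a + y"
  shows "x \<le> a"
proof -
  have "x = inf x (a + y)"
    using assms(5) by (simp add: inf_absorb1)
  also have "\<dots> \<le> inf x a + inf x y"
    using assms(1-3) by (rule inf_add_le)
  also have "\<dots> \<le> a"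
    using assms(4) add_mono[OF inf_le2 assms(4), of x a] by simp
  finally show ?thesis .
qed

lemma disjoint_scaleR:
  fixes x w :: "'a::banach_lattice_algebra"
  assumes "0 \<le> x" "0 \<le> w" "inf x w \<le> 0" "0 \<le> k"
  shows "inf (k *\<^sub>R x) w \<le> 0"
proof -
  have nat: "inf (of_nat n *\<^sub>R x) w \<le> 0" for n
  proof (induction n)
    case (Suc n)
    have "inf (of_nat (Suc n) *\<^sub>R x) w = inf w (x + of_nat n *\<^sub>R x)"
      by (simp add: scaleR_add_left inf_commute add.commute)
    also have "\<dots> \<le> inf w x + inf w (of_nat n *\<^sub>R x)"
      by (rule inf_add_le) (use assms in \<open>simp_all add: scaleR_nonneg_nonneg\<close>)
    also have "\<dots> \<le> 0"
      using Suc assms by (simp add: inf_commute add_nonpos_nonpos)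
    finally show ?case .
  qed (use assms in \<open>simp add: le_infI2\<close>)
  obtain n :: nat where "k \<le> of_nat n"
    using real_arch_simple by blast
  then have "inf (k *\<^sub>R x) w \<le> inf (of_nat n *\<^sub>R x) w"
    using assms(1) by (simp add: scaleR_right_mono le_infI1)
  also have "\<dots> \<le> 0"
    by (rule nat)
  finally show ?thesis .
qed

lemma is_sup_of_disjoint:
  fixes s w :: "'a::lattice_ab_group_add"
  assumes "is_sup_of D s" "\<forall>d\<in>D. inf d w \<le> 0"
  shows "inf s w \<le> 0"
proof -
  have "d \<le> sup s w - w" if "d \<in> D" for d
  proof -
    have "d + w = sup d w + inf d w"
      by (rule add_eq_inf_sup)
    also have "\<dots> \<le> sup s w"
      using assms that unfolding is_sup_of_def
      by (metis add.right_neutral add_mono sup_mono order_refl)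
    finally show ?thesis
      by (simp add: le_diff_eq)
  qed
  then have "s \<le> sup s w - w"
    using assms(1) unfolding is_sup_of_def by blast
  then have "s + w \<le> sup s w"
    by (simp add: le_diff_eq)
  then show ?thesis
    using add_eq_inf_sup[of s w] by simp
qed

lemma is_sup_of_disjoint_labs:
  fixes s w :: "'a::lattice_ab_group_add"
  assumes w: "0 \<le> w" and s: "is_sup_of D s" and D: "\<forall>d\<in>D. inf (labs d) w \<le> 0"
  shows "inf (labs s) w \<le> 0"
proof (cases "D = {}")
  case True
  then have "s \<le> s - w"
    using s unfolding is_sup_of_def by blast
  then show ?thesis
    by (simp add: le_infI2)
next
  case False
  then obtain d0 where d0: "d0 \<in> D"
    by blast
  have "is_sup_of (insert 0 D) (sup s 0)"
    using s unfolding is_sup_of_def by (auto intro: le_supI1)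
  moreover have "\<forall>d\<in>insert 0 D. inf d w \<le> 0"
    using D w labs_ge(1) by (auto simp: le_infI1 intro: order_trans[OF inf_mono])
  ultimately have pos: "inf (sup s 0) w \<le> 0"
    by (rule is_sup_of_disjoint)
  have "- s \<le> labs d0"
    using s d0 labs_ge(2)[of d0] unfolding is_sup_of_def by (meson neg_le_iff_le order_trans)
  then have "sup (- s) 0 \<le> labs d0"
    using labs_nonneg by simp
  then have neg: "inf (sup (- s) 0) w \<le> 0"
    using D d0 by (meson inf_mono order_refl order_trans)
  have "labs s \<le> sup s 0 + sup (- s) 0"
    unfolding labs_def by (simp add: add_increasing add_increasing2)
  then have "inf (labs s) w \<le> inf w (sup s 0 + sup (- s) 0)"
    by (metis inf_commute inf_mono order_refl)
  also have "\<dots> \<le> inf w (sup s 0) + inf w (sup (- s) 0)"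
    using w by (simp add: inf_add_le)
  also have "\<dots> \<le> 0"
    using pos neg by (simp add: inf_commute add_nonpos_nonpos)
  finally show ?thesis .
qed

lemma is_band_disjoint_complement:
  fixes w :: "'a::banach_lattice_algebra"
  assumes w: "0 \<le> w"
  shows "is_band {y. inf (labs y) w \<le> 0}"
  unfolding is_band_def Ball_def mem_Collect_eq
proof (intro conjI allI impI)
  show "inf (labs 0) w \<le> 0"
    by (simp add: labs_of_nonneg)
next
  fix x y assume x: "inf (labs x) w \<le> 0" and y: "inf (labs y) w \<le> 0"
  have "inf (labs (x + y)) w \<le> inf w (labs x + labs y)"
    by (metis labs_add_le inf_commute inf_mono order_refl)
  also have "\<dots> \<le> inf w (labs x) + inf w (labs y)"
    using w by (simp add: inf_add_le labs_nonneg)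
  also have "\<dots> \<le> 0"
    using x y by (simp add: inf_commute add_nonpos_nonpos)
  finally show "inf (labs (x + y)) w \<le> 0" .
next
  fix c x assume "inf (labs x) w \<le> 0"
  then show "inf (labs (c *\<^sub>R x)) w \<le> 0"
    unfolding labs_scaleR using w by (simp add: disjoint_scaleR labs_nonneg)
next
  fix x y assume "inf (labs x) w \<le> 0" "labs y \<le> labs x"
  then show "inf (labs y) w \<le> 0"
    by (meson inf_mono order_refl order_trans)
next
  fix D s assume "D \<subseteq> {y. inf (labs y) w \<le> 0} \<and> is_sup_of D s"
  then show "inf (labs s) w \<le> 0"
    using is_sup_of_disjoint_labs[OF w] by blast
qed

lemma weak_order_unit_disjoint_eq_0:
  fixes e w :: "'a::banach_lattice_algebra"
  assumes e: "weak_order_unit e" and w: "0 \<le> w" "inf w e \<le> 0"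
  shows "w = 0"
proof -
  have "0 \<le> e"
    using e unfolding weak_order_unit_def by (blast intro: less_imp_le)
  then have "e \<in> {y. inf (labs y) w \<le> 0}"
    using w by (simp add: labs_of_nonneg inf_commute)
  then have "band_generated {e} \<subseteq> {y. inf (labs y) w \<le> 0}"
    using is_band_disjoint_complement[OF w(1)] unfolding band_generated_def by blast
  then have "w \<in> {y. inf (labs y) w \<le> 0}"
    using e unfolding weak_order_unit_def by blast
  then show ?thesis
    using w(1) by (simp add: labs_of_nonneg)
qed

lemma inf_diff_inf_eq_0: "inf (u - inf u v) (v - inf u v) = (0::'a::lattice_ab_group_add)"
  using add_inf_distrib_right[of u v "- inf u v"] by (simp only: diff_conv_add_uminus right_minus)

text \<open>Since \<open>u - u \<sqinter> n e\<close> and \<open>n e - u \<sqinter> n e\<close> are disjoint, so are \<open>n t\<close> and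
  \<open>n e - u \<sqinter> n e\<close>, and \<open>n t \<le> u \<sqinter> n e + (n e - u \<sqinter> n e)\<close> forces \<open>n t \<le> u \<sqinter> n e\<close>.\<close>

lemma scaleR_le_truncation:
  fixes t u e :: "'a::banach_lattice_algebra"
  assumes "0 \<le> t" "t \<le> e" "t \<le> u - inf u (of_nat n *\<^sub>R e)" "0 \<le> u" "0 \<le> e"
  shows "of_nat n *\<^sub>R t \<le> inf u (of_nat n *\<^sub>R e)"
proof -
  define c where "c = inf u (of_nat n *\<^sub>R e)"
  have rest: "0 \<le> of_nat n *\<^sub>R e - c"
    unfolding c_def by (simp only: diff_ge_0_iff_ge inf_le2)
  have "inf t (of_nat n *\<^sub>R e - c) \<le> inf (u - c) (of_nat n *\<^sub>R e - c)"
    using assms(3) unfolding c_def by (metis inf_mono order_refl)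
  then have "inf t (of_nat n *\<^sub>R e - c) \<le> 0"
    unfolding c_def inf_diff_inf_eq_0 .
  then have disjoint: "inf (of_nat n *\<^sub>R t) (of_nat n *\<^sub>R e - c) \<le> 0"
    using assms(1) rest by (simp add: disjoint_scaleR)
  have le: "of_nat n *\<^sub>R t \<le> c + (of_nat n *\<^sub>R e - c)"
    using assms(2) by (simp add: scaleR_left_mono)
  have "0 \<le> c"
    unfolding c_def using assms(4,5) by (simp add: scaleR_nonneg_nonneg)
  show ?thesis
    unfolding c_def[symmetric] using assms(1)
    by (intro le_of_disjoint_le_add[OF _ \<open>0 \<le> c\<close> rest disjoint le]) (simp add: scaleR_nonneg_nonneg)
qed

lemma is_inf_of_truncation_remainders:
  fixes u e :: "'a::banach_lattice_algebra"
  assumes archimedean: "\<forall>x y::'a. 0 \<le> x \<and> 0 \<le> y \<and> (\<forall>n::nat. of_nat n *\<^sub>R x \<le> y) \<longrightarrow> x = 0"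
    and e: "weak_order_unit e" and u: "0 \<le> u"
  shows "is_inf_of (range (\<lambda>n::nat. u - inf u (of_nat n *\<^sub>R e))) 0"
  unfolding is_inf_of_def
proof (intro conjI ballI allI impI)
  fix d assume "d \<in> range (\<lambda>n::nat. u - inf u (of_nat n *\<^sub>R e))"
  then obtain n :: nat where "d = u - inf u (of_nat n *\<^sub>R e)"
    by blast
  then show "0 \<le> d"
    by (simp only: diff_ge_0_iff_ge inf_le1)
next
  have "0 \<le> e"
    using e unfolding weak_order_unit_def by (blast intro: less_imp_le)
  fix l assume lower: "\<forall>d\<in>range (\<lambda>n::nat. u - inf u (of_nat n *\<^sub>R e)). l \<le> d"
  define t where "t = inf (sup l 0) e"
  have t: "0 \<le> t" "t \<le> e"
    unfolding t_def using \<open>0 \<le> e\<close> by simp_all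
  have "of_nat n *\<^sub>R t \<le> u" for n
  proof -
    have "l \<le> u - inf u (of_nat n *\<^sub>R e)" "0 \<le> u - inf u (of_nat n *\<^sub>R e)"
      using lower by (blast, simp only: diff_ge_0_iff_ge inf_le1)
    then have "t \<le> u - inf u (of_nat n *\<^sub>R e)"
      unfolding t_def by (intro le_infI1 sup_least)
    then have "of_nat n *\<^sub>R t \<le> inf u (of_nat n *\<^sub>R e)"
      using t u \<open>0 \<le> e\<close> by (intro scaleR_le_truncation)
    then show ?thesis
      by (meson inf_le1 order_trans)
  qed
  then have "t = 0"
    using archimedean t u by blast
  then have "sup l 0 = 0"
    using weak_order_unit_disjoint_eq_0[OF e, of "sup l 0"] unfolding t_def by simp
  then show "l \<le> 0"
    using sup.absorb_iff2[of l 0] by simp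
qed

section \<open>Norm and weak convergence of nets\<close>

lemma net_lim_norm_imp_weak_conv:
  fixes z :: "'i::preorder \<Rightarrow> 'a::real_normed_vector"
  assumes "net_lim (\<lambda>a. norm (z a)) 0"
  shows "weak_conv z 0"
  unfolding weak_conv_def net_lim_def
proof (intro allI impI)
  fix f :: "'a \<Rightarrow> real" and \<epsilon> :: real
  assume f: "bounded_linear f" and "\<epsilon> > 0"
  obtain K where K: "K > 0" "\<And>y. norm (f y) \<le> norm y * K"
    using bounded_linear.pos_bounded[OF f] by blast
  have "\<epsilon> / K > 0"
    using \<open>\<epsilon> > 0\<close> K(1) by simp
  then obtain a where a: "\<forall>b. a \<le> b \<longrightarrow> norm (z b) < \<epsilon> / K"
    using assms unfolding net_lim_def by auto
  have "\<bar>f (z b) - f 0\<bar> < \<epsilon>" if "a \<le> b" for b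
  proof -
    have "\<bar>f (z b)\<bar> \<le> norm (z b) * K"
      using K(2)[of "z b"] by simp
    also have "\<dots> < \<epsilon>"
      using a that K(1) by (simp add: pos_less_divide_eq)
    finally show ?thesis
      using linear_0[OF bounded_linear.linear[OF f]] by simp
  qed
  then show "\<exists>a. \<forall>b. a \<le> b \<longrightarrow> \<bar>f (z b) - f 0\<bar> < \<epsilon>"
    by blast
qed

context
  assumes lattice_norm: "\<forall>x y :: 'a::banach_lattice_algebra. labs x \<le> labs y \<longrightarrow> norm x \<le> norm y"
begin

lemma norm_mono_nonneg: "0 \<le> x \<Longrightarrow> x \<le> y \<Longrightarrow> norm x \<le> norm (y::'a)"
  by (rule lattice_norm[rule_format]) (simp add: labs_of_nonneg order_trans[of 0 x y])

lemma norm_labs: "norm (labs x) = norm (x::'a)"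
  by (intro antisym lattice_norm[rule_format]) (simp_all add: labs_of_nonneg labs_nonneg)

lemma positive_functional_exists:
  fixes w :: 'a
  obtains f where "bounded_linear f" "\<And>y. 0 \<le> y \<Longrightarrow> 0 \<le> f y" "f w = norm (sup w 0)"
proof -
  define p where "p x = norm (sup x (0::'a))" for x
  have p_add: "p (x + y) \<le> p x + p y" for x y
  proof -
    have "sup (x + y) 0 \<le> sup x 0 + sup y 0"
      by (simp add: add_mono add_nonneg_nonneg)
    then have "p (x + y) \<le> norm (sup x 0 + sup y 0)"
      unfolding p_def by (rule norm_mono_nonneg[rotated]) simp
    also have "\<dots> \<le> p x + p y"
      unfolding p_def by (rule norm_triangle_ineq)
    finally show ?thesis .
  qed
  have p_scaleR: "p (c *\<^sub>R x) = c * p x" if "0 \<le> c" for c x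
    using scaleR_sup_distrib[OF that, of x 0, symmetric] that by (simp add: p_def)
  obtain f where "linear f" and f_le: "\<And>x. f x \<le> p x" and "f w = p w"
    using hahn_banach_sublinear[of p w, OF p_add p_scaleR] by blast
  have p_le: "p x \<le> norm x" for x
    unfolding p_def using norm_mono_nonneg[of "sup x 0" "labs x"]
    by (simp add: labs_nonneg labs_ge norm_labs)
  have "\<bar>f x\<bar> \<le> norm x" for x
    using f_le[of x] f_le[of "- x"] p_le[of x] p_le[of "- x"] linear_neg[OF \<open>linear f\<close>, of x]
    by simp
  then have "bounded_linear f"
    using \<open>linear f\<close> by (intro bounded_linear_intro[where K = 1]) (simp_all add: linear_add linear_scale)
  moreover have "0 \<le> f y" if "0 \<le> y" for y
    using f_le[of "- y"] linear_neg[OF \<open>linear f\<close>, of y] that by (simp add: p_def sup_absorb2)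
  ultimately show ?thesis
    using that \<open>f w = p w\<close> unfolding p_def by blast
qed

lemma weak_conv_zero_imp_is_inf_range:
  fixes z :: "'i::preorder \<Rightarrow> 'a"
  assumes pos: "\<forall>a. 0 \<le> z a" and conv: "weak_conv z 0"
  shows "is_inf_of (range z) 0"
  unfolding is_inf_of_def
proof (intro conjI ballI allI impI)
  fix l assume lower: "\<forall>d\<in>range z. l \<le> d"
  show "l \<le> 0"
  proof (rule ccontr)
    assume "\<not> l \<le> 0"
    then have "sup l 0 \<noteq> 0"
      using sup.absorb_iff2[of l 0] by simp
    obtain f where f: "bounded_linear f" "\<And>y. 0 \<le> y \<Longrightarrow> 0 \<le> f y" "f l = norm (sup l 0)"
      using positive_functional_exists[of l] by blast
    then have "f l > 0"
      using \<open>sup l 0 \<noteq> 0\<close> by simp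
    moreover have "net_lim (\<lambda>a. f (z a)) (f 0)"
      using conv f(1) unfolding weak_conv_def by blast
    ultimately obtain a where "\<bar>f (z a) - f 0\<bar> < f l"
      unfolding net_lim_def by (meson order_refl)
    moreover have "0 \<le> f (z a - l)"
      using lower f(2) by simp
    then have "f l \<le> f (z a)"
      using linear_diff[OF bounded_linear.linear[OF f(1)]] by simp
    ultimately show False
      using linear_0[OF bounded_linear.linear[OF f(1)]] by simp
  qed
qed (use pos in auto)

lemma decreasing_is_inf_zero_imp_norm_null:
  fixes z :: "'i::preorder \<Rightarrow> 'a"
  assumes ocn: "order_continuous_norm TYPE('a)" and dir: "directed_index TYPE('i)"
    and dec: "\<forall>a b. a \<le> b \<longrightarrow> z b \<le> z a" and inf: "is_inf_of (range z) 0"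
  shows "net_lim (\<lambda>a. norm (z a)) 0"
  unfolding net_lim_def
proof (intro allI impI)
  fix \<epsilon> :: real assume "\<epsilon> > 0"
  have "\<exists>c\<in>range z. c \<le> z a \<and> c \<le> z b" for a b
  proof -
    obtain c where "a \<le> c" "b \<le> c"
      using dir unfolding directed_index_def by blast
    then show ?thesis
      using dec by blast
  qed
  then have "range z \<noteq> {} \<and> (\<forall>c\<in>range z. \<forall>d\<in>range z. \<exists>e\<in>range z. e \<le> c \<and> e \<le> d)
      \<and> is_inf_of (range z) 0"
    using inf by blast
  then have "\<exists>d\<in>range z. norm d < \<epsilon>"
    using ocn[unfolded order_continuous_norm_def, rule_format, of "range z" \<epsilon>] \<open>\<epsilon> > 0\<close>
    by blast
  then obtain a where a: "norm (z a) < \<epsilon>"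
    by blast
  have "norm (z b) < \<epsilon>" if "a \<le> b" for b
  proof -
    have "0 \<le> z b" "z b \<le> z a"
      using inf dec that unfolding is_inf_of_def by simp_all
    then show ?thesis
      using norm_mono_nonneg[of "z b" "z a"] a by linarith
  qed
  then show "\<exists>a. \<forall>b. a \<le> b \<longrightarrow> \<bar>norm (z b) - 0\<bar> < \<epsilon>"
    by auto
qed

lemma truncation_remainders_norm_null:
  fixes u e :: 'a
  assumes ocn: "order_continuous_norm TYPE('a)"
    and archimedean: "\<forall>x y::'a. 0 \<le> x \<and> 0 \<le> y \<and> (\<forall>n::nat. of_nat n *\<^sub>R x \<le> y) \<longrightarrow> x = 0"
    and e: "weak_order_unit e" and u: "0 \<le> u"
  shows "net_lim (\<lambda>n::nat. norm (u - inf u (of_nat n *\<^sub>R e))) 0"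
proof (rule decreasing_is_inf_zero_imp_norm_null[OF ocn])
  show "directed_index TYPE(nat)"
    unfolding directed_index_def by (meson nat_le_linear order_refl)
  have "0 \<le> e"
    using e unfolding weak_order_unit_def by (blast intro: less_imp_le)
  have "u - inf u (of_nat m *\<^sub>R e) \<le> u - inf u (of_nat n *\<^sub>R e)" if "n \<le> m" for n m
  proof -
    have "of_nat n *\<^sub>R e \<le> of_nat m *\<^sub>R e"
      using that \<open>0 \<le> e\<close> by (intro scaleR_right_mono) simp_all
    then show ?thesis
      by (intro diff_left_mono inf_mono order_refl)
  qed
  then show "\<forall>n m. n \<le> m \<longrightarrow> u - inf u (of_nat m *\<^sub>R e) \<le> u - inf u (of_nat n *\<^sub>R e)"
    by blast
  show "is_inf_of (range (\<lambda>n::nat. u - inf u (of_nat n *\<^sub>R e))) 0"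
    using archimedean e u by (rule is_inf_of_truncation_remainders)
qed

lemma norm_mult_le_truncation:
  fixes x u e :: 'a
  assumes mult_nonneg: "\<forall>a b::'a. 0 \<le> a \<and> 0 \<le> b \<longrightarrow> 0 \<le> a * b"
    and x: "0 \<le> x" and u: "0 \<le> u" and e: "0 \<le> e"
  shows "norm (x * u) \<le> of_nat n * norm (x * e) + norm x * norm (u - inf u (of_nat n *\<^sub>R e))"
proof -
  define c where "c = inf u (of_nat n *\<^sub>R e)"
  have c: "0 \<le> x * c"
    using mult_nonneg x u e unfolding c_def by (simp add: scaleR_nonneg_nonneg)
  have "0 \<le> x * (of_nat n *\<^sub>R e - c)"
    using mult_nonneg x unfolding c_def by (simp only: diff_ge_0_iff_ge inf_le2 simp_thms)
  then have "x * c \<le> x * (of_nat n *\<^sub>R e)"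
    by (simp add: right_diff_distrib)
  then have "norm (x * c) \<le> norm (x * (of_nat n *\<^sub>R e))"
    by (rule norm_mono_nonneg[OF c])
  then have bound_c: "norm (x * c) \<le> of_nat n * norm (x * e)"
    by simp
  have "norm (x * u) \<le> norm (x * c) + norm (x * (u - c))"
    using norm_triangle_ineq[of "x * c" "x * (u - c)"] by (simp add: right_diff_distrib)
  also have "\<dots> \<le> of_nat n * norm (x * e) + norm x * norm (u - c)"
    using bound_c norm_mult_ineq by (rule add_mono)
  finally show ?thesis
    unfolding c_def .
qed

lemma net_lim_norm_mult_of_truncations:
  fixes x :: "'i::preorder \<Rightarrow> 'a" and u e :: 'a
  assumes mult_nonneg: "\<forall>a b::'a. 0 \<le> a \<and> 0 \<le> b \<longrightarrow> 0 \<le> a * b"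
    and dir: "directed_index TYPE('i)"
    and dec: "\<forall>a b. a \<le> b \<longrightarrow> x b \<le> x a" and pos: "\<forall>a. 0 \<le> x a"
    and u: "0 \<le> u" and e: "0 \<le> e"
    and xe: "net_lim (\<lambda>a. norm (x a * e)) 0"
    and trunc: "net_lim (\<lambda>n::nat. norm (u - inf u (of_nat n *\<^sub>R e))) 0"
  shows "net_lim (\<lambda>a. norm (x a * u)) 0"
  unfolding net_lim_def
proof (intro allI impI)
  fix \<epsilon> :: real assume "\<epsilon> > 0"
  \<comment> \<open>any index; beyond it the decreasing net is bounded in norm by \<open>norm (x a0)\<close>\<close>
  fix a0 :: 'i
  define M where "M = norm (x a0) + 1"
  have "M > 0"
    unfolding M_def by (simp add: add_nonneg_pos)
  then obtain n :: nat where n: "norm (u - inf u (of_nat n *\<^sub>R e)) < \<epsilon> / (2 * M)"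
    using trunc \<open>\<epsilon> > 0\<close> unfolding net_lim_def by (auto dest!: spec[of _ "\<epsilon> / (2 * M)"])
  obtain a1 where a1: "\<forall>b. a1 \<le> b \<longrightarrow> norm (x b * e) < \<epsilon> / (2 * (of_nat n + 1))"
    using xe \<open>\<epsilon> > 0\<close> unfolding net_lim_def by (auto dest!: spec[of _ "\<epsilon> / (2 * (of_nat n + 1))"])
  obtain a where a: "a0 \<le> a" "a1 \<le> a"
    using dir unfolding directed_index_def by blast
  have "norm (x b * u) < \<epsilon>" if "a \<le> b" for b
  proof -
    have "a0 \<le> b" "a1 \<le> b"
      using a that by (blast intro: order_trans)+
    then have "0 \<le> x b" "x b \<le> x a0" "norm (x b * e) < \<epsilon> / (2 * (of_nat n + 1))"
      using pos dec a1 by blast+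
    then have "norm (x b) \<le> M"
      using norm_mono_nonneg[of "x b" "x a0"] unfolding M_def by simp
    then have "norm (x b) * norm (u - inf u (of_nat n *\<^sub>R e)) \<le> M * (\<epsilon> / (2 * M))"
      using less_imp_le[OF n] \<open>M > 0\<close> by (intro mult_mono) simp_all
    also have "\<dots> = \<epsilon> / 2"
      using \<open>M > 0\<close> by simp
    finally have rest: "norm (x b) * norm (u - inf u (of_nat n *\<^sub>R e)) \<le> \<epsilon> / 2" .
    have "of_nat n * norm (x b * e) \<le> of_nat n * (\<epsilon> / (2 * (of_nat n + 1)))"
      using \<open>norm (x b * e) < \<epsilon> / (2 * (of_nat n + 1))\<close> by (intro mult_left_mono) simp_all
    also have "\<dots> < \<epsilon> / 2"
      using \<open>\<epsilon> > 0\<close> by (simp add: field_simps)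
    finally have main: "of_nat n * norm (x b * e) < \<epsilon> / 2" .
    show ?thesis
      using norm_mult_le_truncation[OF mult_nonneg \<open>0 \<le> x b\<close> u e, of n] main rest by simp
  qed
  then show "\<exists>a. \<forall>b. a \<le> b \<longrightarrow> \<bar>norm (x b * u) - 0\<bar> < \<epsilon>"
    by auto
qed

end

theorem corollary2p10:
  fixes e :: "'a::banach_lattice_algebra" and x :: "'i::preorder \<Rightarrow> 'a"
  assumes "banach_f_algebra TYPE('a)"
    and "order_continuous_norm TYPE('a)"
    and "weak_order_unit e"
    and "directed_index TYPE('i)"
    and "\<forall>a b. a \<le> b \<longrightarrow> x b \<le> x a"
    and "\<forall>a. 0 \<le> x a"
  shows "mw_conv x 0 \<longleftrightarrow> weak_conv (\<lambda>a. x a * e) 0"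
proof -
  have archimedean: "\<forall>x y::'a. 0 \<le> x \<and> 0 \<le> y \<and> (\<forall>n::nat. of_nat n *\<^sub>R x \<le> y) \<longrightarrow> x = 0"
    and lattice_norm: "\<forall>x y::'a. labs x \<le> labs y \<longrightarrow> norm x \<le> norm y"
    and mult_nonneg: "\<forall>x y::'a. 0 \<le> x \<and> 0 \<le> y \<longrightarrow> 0 \<le> x * y"
    using assms(1) unfolding banach_f_algebra_def by blast+
  have e: "0 \<le> e"
    using assms(3) unfolding weak_order_unit_def by (blast intro: less_imp_le)
  have labs_x: "labs (x a - 0) = x a" for a
    using assms(6) by (simp add: labs_of_nonneg)
  show ?thesis
  proof
    assume "mw_conv x 0"
    then show "weak_conv (\<lambda>a. x a * e) 0"
      using e unfolding mw_conv_def labs_x by blast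
  next
    assume conv: "weak_conv (\<lambda>a. x a * e) 0"
    have pos: "\<forall>a. 0 \<le> x a * e"
      using assms(6) e mult_nonneg by blast
    have "\<forall>a b. a \<le> b \<longrightarrow> x b * e \<le> x a * e"
      using assms(5) e mult_nonneg by (metis diff_ge_0_iff_ge left_diff_distrib)
    then have "net_lim (\<lambda>a. norm (x a * e)) 0"
      using weak_conv_zero_imp_is_inf_range[OF lattice_norm pos conv]
      by (rule decreasing_is_inf_zero_imp_norm_null[OF lattice_norm assms(2,4)])
    then have "net_lim (\<lambda>a. norm (x a * u)) 0" if "0 \<le> u" for u
      using truncation_remainders_norm_null[OF lattice_norm assms(2) archimedean assms(3) that]
      by (rule net_lim_norm_mult_of_truncations[OF lattice_norm mult_nonneg assms(4-6) that e])
    then show "mw_conv x 0"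
      unfolding mw_conv_def labs_x by (blast intro: net_lim_norm_imp_weak_conv)
  qed
qed

end
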